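(* In $\mathfrak{sl}_2[[u]]$ let $v=(1+u)^{-1}-1$ and $\mathcal Y_k=(-1)^k(u^k-v^k)h$ ($k\ge0$). Then $\mathcal Y_0=0$ and for every $n\ge1$ $$\mathcal Y_{2n}=\sum_{k\ge n}(-1)^{k-n+1}\frac{(4^{k-n+1}-1)B_{k-n+1}}{k-n+1}\binom{2k}{2n-1}\mathcal Y_{2k+1},$$ the sum converging $u$-adically. Consequently, for every $L\ge1$, the same relation (a finite sum) holds among the images of $Y_k=(-1)^k\big((t-1)^k-(t^{-1}-1)^k\big)h$ in $\mathfrak{OA}/\mathfrak I_{(t-1)^L}$, where $Y_k\mapsto0$ for $k\ge L$.
   Context: $\mathfrak{sl}_2$ over $\mathbb C$ has basis $e,f,h$ with $[e,f]=h$, $[h,e]=2e$, $[h,f]=-2f$; $\mathfrak{sl}_2[[u]]=\mathbb C[[u]]\otimes\mathfrak{sl}_2$. Bernoulli numbers: define $b_j$ by $\frac{x}{e^x-1}=\sum_{j\ge0}b_j\frac{x^j}{j!}$ and set $B_j=(-1)^{j-1}b_{2j}$ for $j\ge1$ (so $B_1=1/6$, $B_2=1/30$). The Onsager algebra is $\mathfrak{OA}=\{p(t)e+p(t^{-1})f+q(t)h:\ p,q\in\mathbb C[t,t^{-1}],\ q(t^{-1})=-q(t)\}\subset\mathbb C[t,t^{-1}]\otimes\mathfrak{sl}_2$, and $\mathfrak I_{(t-1)^L}=\{p(t)e+p(t^{-1})f+q(t)h\in\mathfrak{OA}: p,q\in(t-1)^L\mathbb C[t,t^{-1}]\}$ is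 an ideal. Taylor expansion at $t=1$ ($u=t-1$) embeds $\mathfrak{OA}$ into $\mathfrak{sl}_2[[u]]$, sending $Y_k$ to $\mathcal Y_k$. *)

theory Defs
  imports Complex_Main "HOL-Computational_Algebra.Formal_Power_Series"
          "HOL-Computational_Algebra.Polynomial" "HOL-Library.Product_Plus" "HOL-Library.Function_Algebras"
begin

text \<open>b_j defined by x/(e^x - 1) = sum b_j x^j / j!; here x/(e^x-1) is the inverse of the
  power series (e^x - 1)/x.\<close>
definition bern :: "nat \<Rightarrow> complex" where
  "bern j = fact j * fps_nth (inverse (fps_shift 1 (fps_exp 1 - 1))) j"

definition BB :: "nat \<Rightarrow> complex" where
  "BB j = (-1) ^ (j - 1) * bern (2 * j)"

definition coefY :: "nat \<Rightarrow> nat \<Rightarrow> complex" where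
  "coefY n k = (-1) ^ (k - n + 1) * ((4 ^ (k - n + 1) - 1) * BB (k - n + 1) / of_nat (k - n + 1))
               * of_nat ((2 * k) choose (2 * n - 1))"

text \<open>An element a e + b f + c h with a,b,c in C[[u]] is the triple (a,b,c);
  the u-adic topology is the product of the fps (X-adic) topologies.\<close>
type_synonym sl2fps = "complex fps \<times> complex fps \<times> complex fps"

definition smul_fps :: "complex \<Rightarrow> sl2fps \<Rightarrow> sl2fps" where
  "smul_fps c x = (fps_const c * fst x, fps_const c * fst (snd x), fps_const c * snd (snd x))"

definition vfps :: "complex fps" where
  "vfps = inverse (1 + fps_X) - 1"

definition Yu :: "nat \<Rightarrow> sl2fps" where
  "Yu k = (0, 0, (-1) ^ k * (fps_X ^ k - vfps ^ k))"

text \<open>A function on C is (represents) a Laurent polynomial if on C - {0} it equals p(t)/t^N.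
  Elements p(t) e + p'(t) f + q(t) h are triples of functions, only their values at t \<noteq> 0 matter.\<close>
definition laurent :: "(complex \<Rightarrow> complex) \<Rightarrow> bool" where
  "laurent f \<longleftrightarrow> (\<exists>(p::complex poly) (N::nat). \<forall>t. t \<noteq> 0 \<longrightarrow> f t = poly p t / t ^ N)"

type_synonym loopel = "(complex \<Rightarrow> complex) \<times> (complex \<Rightarrow> complex) \<times> (complex \<Rightarrow> complex)"

definition OA :: "loopel set" where
  "OA = {x. \<exists>p q. laurent p \<and> laurent q \<and> (\<forall>t. t \<noteq> 0 \<longrightarrow> q (1 / t) = - q t) \<and>
          (\<forall>t. t \<noteq> 0 \<longrightarrow> fst x t = p t \<and> fst (snd x) t = p (1 / t) \<and> snd (snd x) t = q t)}"

definition divisible_by_pow :: "nat \<Rightarrow> (complex \<Rightarrow> complex) \<Rightarrow> bool" where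
  "divisible_by_pow L p \<longleftrightarrow> (\<exists>r. laurent r \<and> (\<forall>t. t \<noteq> 0 \<longrightarrow> p t = (t - 1) ^ L * r t))"

definition ideal_I :: "nat \<Rightarrow> loopel set" where
  "ideal_I L = {x. \<exists>p q. laurent p \<and> laurent q \<and> (\<forall>t. t \<noteq> 0 \<longrightarrow> q (1 / t) = - q t) \<and>
          divisible_by_pow L p \<and> divisible_by_pow L q \<and>
          (\<forall>t. t \<noteq> 0 \<longrightarrow> fst x t = p t \<and> fst (snd x) t = p (1 / t) \<and> snd (snd x) t = q t)}"

definition smul_loop :: "complex \<Rightarrow> loopel \<Rightarrow> loopel" where
  "smul_loop c x = ((\<lambda>t. c * fst x t), (\<lambda>t. c * fst (snd x) t), (\<lambda>t. c * snd (snd x) t))"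

definition YO :: "nat \<Rightarrow> loopel" where
  "YO k = ((\<lambda>t. 0), (\<lambda>t. 0), (\<lambda>t. (-1) ^ k * ((t - 1) ^ k - (1 / t - 1) ^ k)))"

definition cong_mod_I :: "nat \<Rightarrow> loopel \<Rightarrow> loopel \<Rightarrow> bool" where
  "cong_mod_I L x y \<longleftrightarrow> x - y \<in> ideal_I L"

end

theory Submission
  imports Defs "HOL-Computational_Algebra.Polynomial_FPS"
begin

text \<open>
  Only the $h$-components matter: $\mathcal Y_k = y_k h$ with
  $y_k = (-1)^k (u^k - v^k) = (-1)^k u^k - u^k (1+u)^{-k}$, so $y_k = O(u^k)$ and
  $[u^{M+1}]\, y_{m+1} = (-1)^{m+1}[m = M] - (-1)^{M-m} \binom{M}{m}$.
  Hence $\sum_{m<N} g_m [u^N]\, y_{m+1} = 0$ for all $N$ whenever the sequence $g$ satisfies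
  $\sum_m \binom{M}{m} (-1)^m g_m = -g_M$, which is the case for $g_m = m!\,[x^m] G$ if
  $G(-x) e^x = -G(x)$. We take $G = x^{2n-1} T(x)$ with $T(x) = 2e^x/(e^x+1) = 1 + \tanh(x/2)$:
  $T(-x) e^x = T(x)$, the even coefficients of $T$ beyond the constant term vanish, and
  $x T(x) = 2x - 2B(x) + 2B(2x)$ for $B(x) = x/(e^x-1)$ expresses its odd coefficients through
  Bernoulli numbers. The resulting identity is, coefficient by coefficient, the expansion of
  $y_{2n}$ in the $y_{2k+1}$.

  For the Onsager algebra, $t^M Y_k(t)$ is a polynomial in $t - 1$ whose Taylor series is
  $(1+u)^M y_k$, so a relation among the $y_k$ modulo $u^L$ is a relation among the $Y_k$
  modulo $(t-1)^L$, i.e. modulo $\mathfrak I_{(t-1)^L}$.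
\<close>

unbundle fps_syntax

section \<open>Bernoulli numbers and the series $1 + \tanh(x/2)$\<close>

definition bernoulli_egf :: "'a::field_char_0 fps" where
  "bernoulli_egf = inverse (fps_shift 1 (fps_exp 1 - 1))"

lemma bern_eq_bernoulli_egf: "bern j = fact j * bernoulli_egf $ j"
  by (simp add: bern_def bernoulli_egf_def)

lemma bernoulli_egf_times_exp_minus_1:
  "(bernoulli_egf :: 'a::field_char_0 fps) * (fps_exp 1 - 1) = fps_X"
proof -
  have "fps_X * fps_shift 1 (fps_exp 1 - 1) = (fps_exp 1 - 1 :: 'a fps)"
    by (rule fps_ext) simp
  moreover have "bernoulli_egf * fps_shift 1 (fps_exp 1 - 1) = (1 :: 'a fps)"
    unfolding bernoulli_egf_def by (rule inverse_mult_eq_1) simp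
  ultimately show ?thesis by (metis mult.left_commute mult.right_neutral)
qed

lemma exp_plus_1_neq_0 [simp]: "fps_exp 1 + 1 \<noteq> (0 :: 'a::field_char_0 fps)"
proof
  assume "fps_exp 1 + 1 = (0 :: 'a fps)"
  then have "(fps_exp 1 + 1 :: 'a fps) $ 0 = 0" by simp
  then show False by simp
qed

definition one_plus_tanh_half :: "'a::field_char_0 fps" where
  "one_plus_tanh_half = 2 * fps_exp 1 / (fps_exp 1 + 1)"

lemma one_plus_tanh_half_times:
  "(one_plus_tanh_half :: 'a::field_char_0 fps) * (fps_exp 1 + 1) = 2 * fps_exp 1"
proof -
  have "inverse (fps_exp 1 + 1) * (fps_exp 1 + 1) = (1 :: 'a fps)"
    by (rule inverse_mult_eq_1) simp
  then show ?thesis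
    by (simp add: one_plus_tanh_half_def fps_divide_unit mult.assoc)
qed

lemma one_plus_tanh_half_mirror_times:
  "(one_plus_tanh_half oo - fps_X :: 'a::field_char_0 fps) * (fps_exp 1 + 1) = 2"
proof -
  let ?R = "one_plus_tanh_half oo - fps_X :: 'a fps"
  have e: "fps_exp 1 * fps_exp (-1) = (1 :: 'a fps)"
    using fps_exp_add_mult[of "1::'a" "-1"] by simp
  have "(one_plus_tanh_half * (fps_exp 1 + 1)) oo - fps_X = (2 * fps_exp 1 oo - fps_X :: 'a fps)"
    by (simp add: one_plus_tanh_half_times)
  then have mirrored: "?R * (fps_exp (-1) + 1) = 2 * fps_exp (-1)"
    by (simp add: fps_compose_mult_distrib fps_compose_add_distrib)
  have "?R * (fps_exp 1 + 1) = ?R * (fps_exp 1 * fps_exp (-1) + fps_exp 1)"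
    by (simp add: e)
  also have "\<dots> = fps_exp 1 * (?R * (fps_exp (-1) + 1))"
    by (simp add: algebra_simps)
  also have "\<dots> = 2 * (fps_exp 1 * fps_exp (-1))"
    by (simp add: mirrored mult.left_commute)
  finally show ?thesis by (simp add: e)
qed

lemma one_plus_tanh_half_reflect:
  "(one_plus_tanh_half oo - fps_X :: 'a::field_char_0 fps) * fps_exp 1 = one_plus_tanh_half"
proof -
  have "((one_plus_tanh_half oo - fps_X) * fps_exp 1) * (fps_exp 1 + 1)
      = (one_plus_tanh_half * (fps_exp 1 + 1) :: 'a fps)"
    by (simp only: mult.assoc mult.commute[of "fps_exp 1"])
       (simp add: one_plus_tanh_half_times one_plus_tanh_half_mirror_times flip: mult.assoc)
  then show ?thesis by simp
qed

lemma one_plus_tanh_half_plus_mirror: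
  "one_plus_tanh_half + (one_plus_tanh_half oo - fps_X) = (2 :: 'a::field_char_0 fps)"
proof -
  have "(one_plus_tanh_half + (one_plus_tanh_half oo - fps_X)) * (fps_exp 1 + 1)
      = (2 * (fps_exp 1 + 1) :: 'a fps)"
    by (simp only: distrib_right one_plus_tanh_half_times one_plus_tanh_half_mirror_times)
       (simp add: algebra_simps)
  then show ?thesis by (simp only: mult_right_cancel[OF exp_plus_1_neq_0])
qed

lemma one_plus_tanh_half_nth_0 [simp]: "one_plus_tanh_half $ 0 = (1 :: 'a::field_char_0)"
proof -
  have "(one_plus_tanh_half * (fps_exp 1 + 1)) $ 0 = (2 * fps_exp 1 :: 'a fps) $ 0"
    by (simp only: one_plus_tanh_half_times)
  then show ?thesis by simp
qed

lemma one_plus_tanh_half_nth_even: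
  assumes "i \<noteq> 0"
  shows "one_plus_tanh_half $ (2 * i) = (0 :: 'a::field_char_0)"
proof -
  have "(one_plus_tanh_half + (one_plus_tanh_half oo - fps_X)) $ (2 * i) = (2 :: 'a fps) $ (2 * i)"
    by (simp only: one_plus_tanh_half_plus_mirror)
  then show ?thesis using assms by (simp add: fps_compose_uminus' fps_numeral_nth)
qed

lemma one_plus_tanh_half_bernoulli:
  "fps_X * one_plus_tanh_half
     = 2 * fps_X - 2 * bernoulli_egf
       + 2 * (bernoulli_egf oo (fps_const 2 * fps_X) :: 'a::field_char_0 fps)"
proof -
  let ?E = "fps_exp 1 :: 'a fps" and ?B = "bernoulli_egf :: 'a fps"
  have B: "?B * (?E - 1) = fps_X"
    by (rule bernoulli_egf_times_exp_minus_1)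
  have "(?B * (?E - 1)) oo (fps_const 2 * fps_X) = fps_X oo (fps_const 2 * fps_X)"
    by (simp only: B)
  then have B2: "(?B oo (fps_const 2 * fps_X)) * (?E * ?E - 1) = 2 * fps_X"
    by (simp add: fps_compose_mult_distrib fps_compose_sub_distrib fps_numeral_fps_const
        flip: fps_exp_add_mult)
  have E1: "?E - 1 \<noteq> 0"
  proof
    assume "?E - 1 = 0"
    then have "(?E - 1) $ 1 = 0" by simp
    then show False by simp
  qed
  have "(fps_X * one_plus_tanh_half) * ((?E + 1) * (?E - 1)) = fps_X * (2 * ?E) * (?E - 1)"
    by (simp add: one_plus_tanh_half_times mult.assoc flip: mult.assoc[of one_plus_tanh_half])
  also have "\<dots> = 2 * fps_X * ((?E + 1) * (?E - 1)) - 2 * (?B * (?E - 1)) * (?E + 1)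
      + 2 * ((?B oo (fps_const 2 * fps_X)) * (?E * ?E - 1))"
    unfolding B B2 by (simp add: algebra_simps)
  also have "\<dots>
      = (2 * fps_X - 2 * ?B + 2 * (?B oo (fps_const 2 * fps_X))) * ((?E + 1) * (?E - 1))"
    by (simp add: algebra_simps)
  finally show ?thesis using E1 by simp
qed

lemma one_plus_tanh_half_nth_odd:
  "one_plus_tanh_half $ (2 * j + 1)
     = 2 * (4 ^ (j + 1) - 1) * (bernoulli_egf $ (2 * j + 2) :: 'a::field_char_0)"
proof -
  have "(2::'a) ^ (2 * j + 2) = 4 ^ (j + 1)"
    by (simp add: power_mult flip: mult_Suc_right)
  moreover have "(fps_X * one_plus_tanh_half) $ (2 * j + 2) = (2 * fps_X - 2 * bernoulli_egf
      + 2 * (bernoulli_egf oo (fps_const 2 * fps_X)) :: 'a fps) $ (2 * j + 2)"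
    by (simp only: one_plus_tanh_half_bernoulli)
  ultimately show ?thesis by (simp add: fps_numeral_fps_const) (simp add: algebra_simps)
qed

lemma minus_one_power_diff:
  assumes "m \<le> M"
  shows "(-1 :: 'a::comm_ring_1) ^ (M - m) = (-1) ^ M * (-1) ^ m"
proof -
  have "(-1 :: 'a) ^ M = (-1) ^ (M - m) * (-1) ^ m"
    using assms by (simp flip: power_add)
  then show ?thesis by (simp add: mult.assoc)
qed

lemma binomial_transform_of_reflected_egf:
  fixes G :: "'a::field_char_0 fps"
  assumes "(G oo - fps_X) * fps_exp 1 = - G"
  shows "(\<Sum>m\<le>M. of_nat (M choose m) * (-1) ^ m * (fact m * G $ m)) = - (fact M * G $ M)"
proof -
  have "((G oo - fps_X) * fps_exp 1) $ M = (- G) $ M"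
    by (simp only: assms)
  then have "(\<Sum>m\<le>M. (-1) ^ m * G $ m / fact (M - m)) = - G $ M"
    by (simp add: fps_mult_nth fps_compose_uminus' atLeast0AtMost)
  then have "fact M * (\<Sum>m\<le>M. (-1) ^ m * G $ m / fact (M - m)) = - (fact M * G $ M)"
    by simp
  moreover have "fact M * ((-1) ^ m * G $ m / fact (M - m))
      = of_nat (M choose m) * (-1) ^ m * (fact m * G $ m)" if "m \<le> M" for m
    using that by (simp add: binomial_fact field_simps)
  ultimately show ?thesis
    by (simp add: sum_distrib_left)
qed

lemma reflected_egf_odd_power_X_times:
  fixes F :: "'a::field_char_0 fps"
  assumes "odd i" "(F oo - fps_X) * fps_exp 1 = F"
  shows "((fps_X ^ i * F) oo - fps_X) * fps_exp 1 = - (fps_X ^ i * F)"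
proof -
  have "(fps_X ^ i * F) oo - fps_X = (- fps_X) ^ i * (F oo - fps_X)"
    by (simp add: fps_compose_mult_distrib fps_compose_power[symmetric])
  then show ?thesis
    using assms by (simp add: mult.assoc)
qed

section \<open>The elements $\mathcal Y_k$ of $\mathfrak{sl}_2[[u]]$\<close>

definition Yh :: "nat \<Rightarrow> complex fps" where
  "Yh k = (-1) ^ k * (fps_X ^ k - vfps ^ k)"

lemma Yu_eq: "Yu k = (0, 0, Yh k)"
  by (simp add: Yu_def Yh_def)

lemma vfps_times_1_plus_X: "vfps * (1 + fps_X) = - fps_X"
proof -
  have "inverse (1 + fps_X :: complex fps) * (1 + fps_X) = 1"
    by (rule inverse_mult_eq_1) simp
  then show ?thesis by (simp add: vfps_def algebra_simps)
qed

lemma vfps_power: "vfps ^ m = (- fps_X) ^ m * inverse ((1 + fps_X) ^ m)"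
proof -
  have "(1 + fps_X :: complex fps) ^ m * inverse ((1 + fps_X) ^ m) = 1"
    by (rule inverse_mult_eq_1') simp
  then have "vfps ^ m = (vfps * (1 + fps_X)) ^ m * inverse ((1 + fps_X) ^ m)"
    by (simp add: power_mult_distrib mult.assoc)
  then show ?thesis by (simp add: vfps_times_1_plus_X)
qed

lemma inverse_1_plus_X_power_nth:
  "inverse ((1 + fps_X :: complex fps) ^ m) $ j = (-1) ^ j * of_nat ((m + j - 1) choose j)"
proof (cases "m + j = 0")
  case False
  have "inverse ((1 + fps_X :: complex fps) ^ m) $ j = (- of_nat m) gchoose j"
    by (simp flip: fps_binomial_minus_of_nat)
  also have "\<dots> = (-1) ^ j * ((of_nat m + of_nat j - 1) gchoose j)"
    by (rule gbinomial_minus)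
  also have "(of_nat m + of_nat j - 1 :: complex) = of_nat (m + j - 1)"
    using False by (simp only: of_nat_diff[of 1 "m + j"] of_nat_add of_nat_1)
  finally show ?thesis by (simp add: binomial_gbinomial)
qed simp

lemma Yh_nth:
  "Yh m $ N = (if N = m then (-1) ^ m else 0)
     - (if m \<le> N then (-1) ^ (N - m) * of_nat ((N - 1) choose (N - m)) else 0)"
proof -
  have "(-1 :: complex fps) ^ m = fps_const ((-1) ^ m)"
    by (simp flip: fps_const_power fps_const_neg)
  moreover have "(-1 :: complex fps) ^ m * (-1) ^ m = 1"
    by (simp flip: power_mult_distrib)
  ultimately have "Yh m = fps_const ((-1) ^ m) * fps_X ^ m - fps_X ^ m * inverse ((1 + fps_X) ^ m)"
    unfolding Yh_def vfps_power power_minus[of fps_X] by (simp add: algebra_simps)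
  then show ?thesis
    by (auto simp: fps_X_power_mult_nth inverse_1_plus_X_power_nth)
qed

lemma reflected_egf_annihilates_Yh:
  fixes G :: "complex fps"
  assumes "(G oo - fps_X) * fps_exp 1 = - G"
  shows "(\<Sum>m<N. fact m * G $ m * Yh (Suc m) $ N) = 0"
proof (cases N)
  case (Suc M)
  define g where "g m = fact m * G $ m" for m
  have coeff: "Yh (Suc m) $ Suc M
      = (if m = M then (-1) ^ Suc M else 0) - (-1) ^ M * (of_nat (M choose m) * (-1) ^ m)"
    if "m \<le> M" for m
    using that by (simp add: Yh_nth minus_one_power_diff binomial_symmetric[symmetric])
  have "(\<Sum>m<N. g m * Yh (Suc m) $ N)
      = (\<Sum>m\<le>M. (if m = M then (-1) ^ Suc M * g M else 0)
          - (-1) ^ M * (of_nat (M choose m) * (-1) ^ m * g m))"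
    unfolding Suc lessThan_Suc_atMost by (intro sum.cong) (auto simp: coeff algebra_simps)
  also have "\<dots> = (-1) ^ Suc M * g M - (-1) ^ M * (\<Sum>m\<le>M. of_nat (M choose m) * (-1) ^ m * g m)"
    by (simp add: sum_subtractf sum_distrib_left)
  also have "\<dots> = 0"
    using binomial_transform_of_reflected_egf[OF assms] by (simp add: g_def)
  finally show ?thesis by (simp add: g_def)
qed simp

lemma coefY_eq_tanh_coeff:
  assumes "n \<ge> 1"
  shows "fact (2 * n - 1) * coefY n (n + j)
    = - fact (2 * (n + j)) * one_plus_tanh_half $ (2 * j + 1)"
proof -
  define s J F C where "s = (-1 :: complex) ^ j" and "J = (of_nat (j + 1) :: complex)"
    and "F = (fact (2 * j + 1) :: complex)"
    and "C = (of_nat (2 * (n + j) choose (2 * n - 1)) :: complex)"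
  define P b where "P = (4 :: complex) ^ (j + 1) - 1"
    and "b = (bernoulli_egf $ (2 * j + 2) :: complex)"
  have J_neq_0: "J \<noteq> 0"
    unfolding J_def of_nat_eq_0_iff by simp
  have "coefY n (n + j) = (- s) * (P * (s * (2 * J * F * b)) / J) * C"
    by (simp add: coefY_def BB_def bern_eq_bernoulli_egf s_def J_def F_def C_def P_def b_def)
  also have "\<dots> = - (s * s) * (J / J) * (2 * P * F * b * C)"
    by (simp add: field_simps)
  also have "\<dots> = - (F * C * (2 * P * b))"
    using J_neq_0 by (simp add: s_def)
  finally have "fact (2 * n - 1) * coefY n (n + j) = - (fact (2 * n - 1) * F * C) * (2 * P * b)"
    by (simp add: mult.assoc)
  moreover have "fact (2 * n - 1) * F * C = fact (2 * (n + j))"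
  proof -
    have "2 * (n + j) - (2 * n - 1) = 2 * j + 1"
      using assms by simp
    then have "fact (2 * n - 1) * fact (2 * j + 1) * (2 * (n + j) choose (2 * n - 1))
        = fact (2 * (n + j))"
      using binomial_fact_lemma[of "2 * n - 1" "2 * (n + j)"] by simp
    then show ?thesis
      unfolding F_def C_def by (metis of_nat_fact of_nat_mult)
  qed
  ultimately show ?thesis
    by (simp only: one_plus_tanh_half_nth_odd P_def b_def)
qed

lemma tanh_weight_odd:
  assumes "n \<ge> 1"
  shows "(fps_X ^ (2 * n - 1) * one_plus_tanh_half) $ (2 * (n + j) + 1) = (0 :: complex)"
proof -
  have "2 * (n + j) + 1 = (2 * n - 1) + 2 * Suc j"
    using assms by simp
  then show ?thesis
    using one_plus_tanh_half_nth_even[of "Suc j", where 'a = complex]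
    by (simp only: fps_X_power_mult_nth) simp
qed

lemma tanh_weight_even:
  assumes "n \<ge> 1"
  shows "fact (2 * (n + j)) * (fps_X ^ (2 * n - 1) * one_plus_tanh_half) $ (2 * (n + j))
    = - fact (2 * n - 1) * coefY n (n + j)"
proof -
  have "2 * (n + j) = (2 * n - 1) + (2 * j + 1)"
    using assms by simp
  then show ?thesis
    using coefY_eq_tanh_coeff[OF assms, of j] by (simp only: fps_X_power_mult_nth) simp
qed

lemma sum_tanh_weights:
  fixes z :: "nat \<Rightarrow> complex"
  assumes "n \<ge> 1"
  shows "(\<Sum>m<2 * n + 2 * J. fact m * (fps_X ^ (2 * n - 1) * one_plus_tanh_half) $ m * z m)
     = fact (2 * n - 1) * (z (2 * n - 1) - (\<Sum>j<J. coefY n (n + j) * z (2 * (n + j))))"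
proof (induction J)
  case 0
  have bound: "2 * n + 2 * 0 = Suc (2 * n - 1)"
    using assms by simp
  have "(\<Sum>m<2 * n - 1. fact m * (fps_X ^ (2 * n - 1) * one_plus_tanh_half) $ m * z m) = 0"
    by (intro sum.neutral) (simp add: fps_X_power_mult_nth)
  then show ?case
    unfolding bound sum.lessThan_Suc by (simp add: fps_X_power_mult_nth)
next
  case (Suc J)
  have bound: "2 * n + 2 * Suc J = Suc (Suc (2 * (n + J)))"
    by simp
  show ?case
    unfolding bound sum.lessThan_Suc
    using Suc.IH tanh_weight_odd[OF assms, of J] tanh_weight_even[OF assms, of J]
    by (simp add: algebra_simps)
qed

lemma Yh_nth_eq_0: "N < m \<Longrightarrow> Yh m $ N = 0"
  by (simp add: Yh_nth)

lemma sum_Yh_odd_nth_truncate: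
  assumes "finite A" and "\<forall>k\<in>A. n \<le> k"
    and "\<forall>k. n \<le> k \<and> 2 * k + 1 \<le> N \<longrightarrow> k \<in> A"
  shows "(\<Sum>k\<in>A. c k * Yh (2 * k + 1) $ N)
    = (\<Sum>k | n \<le> k \<and> 2 * k + 1 \<le> N. c k * Yh (2 * k + 1) $ N)"
proof (rule sum.mono_neutral_right)
  show "\<forall>k\<in>A - {k. n \<le> k \<and> 2 * k + 1 \<le> N}. c k * Yh (2 * k + 1) $ N = 0"
  proof
    fix k
    assume "k \<in> A - {k. n \<le> k \<and> 2 * k + 1 \<le> N}"
    then have "N < 2 * k + 1"
      using assms(2) by auto
    then show "c k * Yh (2 * k + 1) $ N = 0"
      by (simp add: Yh_nth_eq_0)
  qed
qed (use assms in auto)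

lemma Yh_even_nth_eq_sum:
  assumes "n \<ge> 1"
  shows "Yh (2 * n) $ N = (\<Sum>k | n \<le> k \<and> 2 * k + 1 \<le> N. coefY n k * Yh (2 * k + 1) $ N)"
proof -
  define G :: "complex fps" where "G = fps_X ^ (2 * n - 1) * one_plus_tanh_half"
  define z where "z m = Yh (Suc m) $ N" for m
  have "odd (2 * n - 1)"
    using assms by simp
  then have "(G oo - fps_X) * fps_exp 1 = - G"
    unfolding G_def by (rule reflected_egf_odd_power_X_times) (rule one_plus_tanh_half_reflect)
  then have "0 = (\<Sum>m<N. fact m * G $ m * z m)"
    unfolding z_def by (rule reflected_egf_annihilates_Yh[symmetric])
  also have "\<dots> = (\<Sum>m<2 * n + 2 * N. fact m * G $ m * z m)"
    by (rule sum.mono_neutral_left) (auto simp: z_def Yh_nth_eq_0)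
  also have "\<dots> = fact (2 * n - 1) * (z (2 * n - 1) - (\<Sum>j<N. coefY n (n + j) * z (2 * (n + j))))"
    unfolding G_def by (rule sum_tanh_weights[OF assms])
  finally have "Yh (2 * n) $ N = (\<Sum>j<N. coefY n (n + j) * Yh (2 * (n + j) + 1) $ N)"
    using assms by (simp add: z_def)
  also have "\<dots> = (\<Sum>k\<in>(+) n ` {..<N}. coefY n k * Yh (2 * k + 1) $ N)"
    by (simp add: sum.reindex)
  also have "\<dots> = (\<Sum>k | n \<le> k \<and> 2 * k + 1 \<le> N. coefY n k * Yh (2 * k + 1) $ N)"
  proof (rule sum_Yh_odd_nth_truncate)
    show "\<forall>k. n \<le> k \<and> 2 * k + 1 \<le> N \<longrightarrow> k \<in> (+) n ` {..<N}"
    proof (intro allI impI)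
      fix k
      assume "n \<le> k \<and> 2 * k + 1 \<le> N"
      then show "k \<in> (+) n ` {..<N}"
        by (intro image_eqI[of _ _ "k - n"]) auto
    qed
  qed auto
  finally show ?thesis .
qed

lemma Yh_even_nth_expansion:
  assumes "n \<ge> 1" and "finite K" and "\<forall>k\<in>K. n \<le> k"
    and "\<forall>k. n \<le> k \<and> 2 * k + 1 \<le> N \<longrightarrow> k \<in> K"
  shows "Yh (2 * n) $ N = (\<Sum>k\<in>K. coefY n k * Yh (2 * k + 1) $ N)"
  using Yh_even_nth_eq_sum[OF assms(1)] sum_Yh_odd_nth_truncate[OF assms(2-4)] by simp

lemma Yh_even_sums:
  assumes "n \<ge> 1"
  shows "(\<lambda>j. fps_const (coefY n (n + j)) * Yh (2 * (n + j) + 1)) sums Yh (2 * n)"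
  unfolding sums_def
proof (rule tendsto_fpsI, rule eventually_sequentiallyI)
  fix N J :: nat
  assume "N \<le> J"
  have "Yh (2 * n) $ N = (\<Sum>k\<in>(+) n ` {..<J}. coefY n k * Yh (2 * k + 1) $ N)"
  proof (rule Yh_even_nth_expansion[OF assms])
    show "\<forall>k. n \<le> k \<and> 2 * k + 1 \<le> N \<longrightarrow> k \<in> (+) n ` {..<J}"
    proof (intro allI impI)
      fix k
      assume "n \<le> k \<and> 2 * k + 1 \<le> N"
      then show "k \<in> (+) n ` {..<J}"
        using \<open>N \<le> J\<close> by (intro image_eqI[of _ _ "k - n"]) auto
    qed
  qed auto
  then show "(\<Sum>j<J. fps_const (coefY n (n + j)) * Yh (2 * (n + j) + 1)) $ N = Yh (2 * n) $ N"
    by (simp add: fps_sum_nth sum.reindex)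
qed

lemma sums_third_component:
  fixes h :: "nat \<Rightarrow> 'a::{topological_space, comm_monoid_add}"
  assumes "h sums y"
  shows "(\<lambda>j. (0 :: 'b::{topological_space, comm_monoid_add},
      0 :: 'c::{topological_space, comm_monoid_add}, h j)) sums (0, 0, y)"
  using assms unfolding sums_def sum_prod by (intro tendsto_Pair tendsto_const) simp_all

section \<open>The quotients $\mathfrak{OA}/\mathfrak I_{(t-1)^L}$\<close>

lemma laurent_poly_shift_div_power:
  assumes "\<forall>t. t \<noteq> 0 \<longrightarrow> q t = poly P (t - 1) / t ^ M"
  shows "laurent q"
  unfolding laurent_def using assms
  by (intro exI[of _ "pcompose P [:-1, 1:]"] exI[of _ M]) (simp add: poly_pcompose)

lemma divisible_by_pow_poly_shift_div_power:
  assumes "\<forall>t. t \<noteq> 0 \<longrightarrow> q t = poly P (t - 1) / t ^ M" and "\<forall>N<L. coeff P N = 0"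
  shows "divisible_by_pow L q"
proof -
  have "monom 1 L dvd P"
    using assms(2) by (simp add: monom_1_dvd_iff')
  then obtain R where R: "P = monom 1 L * R"
    by (elim dvdE)
  show ?thesis
    unfolding divisible_by_pow_def
  proof (intro exI conjI)
    show "laurent (\<lambda>t. poly R (t - 1) / t ^ M)"
      using laurent_poly_shift_div_power[of "\<lambda>t. poly R (t - 1) / t ^ M" R M] by simp
    show "\<forall>t. t \<noteq> 0 \<longrightarrow> q t = (t - 1) ^ L * (poly R (t - 1) / t ^ M)"
      using assms(1) by (simp add: R poly_monom)
  qed
qed

lemma h_component_in_ideal_I:
  assumes "\<forall>t. t \<noteq> 0 \<longrightarrow> q t = poly P (t - 1) / t ^ M" and "\<forall>N<L. coeff P N = 0"
    and "\<forall>t. t \<noteq> 0 \<longrightarrow> q (1 / t) = - q t"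
  shows "(0, 0, q) \<in> ideal_I L"
  unfolding ideal_I_def
proof (intro CollectI exI conjI)
  show "laurent (\<lambda>t. 0)"
    using laurent_poly_shift_div_power[of "\<lambda>t. 0" 0 0] by simp
  show "divisible_by_pow L (\<lambda>t. 0)"
    using divisible_by_pow_poly_shift_div_power[of "\<lambda>t. 0" 0 0] by simp
  show "laurent q"
    using assms(1) by (rule laurent_poly_shift_div_power)
  show "divisible_by_pow L q"
    using assms(1,2) by (rule divisible_by_pow_poly_shift_div_power)
qed (use assms(3) in auto)

definition YOh :: "nat \<Rightarrow> complex \<Rightarrow> complex" where
  "YOh k t = (-1) ^ k * ((t - 1) ^ k - (1 / t - 1) ^ k)"

lemma YO_eq: "YO k = (0, 0, YOh k)"
  by (simp add: YO_def YOh_def zero_fun_def fun_eq_iff)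

lemma YOh_inverse: "t \<noteq> 0 \<Longrightarrow> YOh k (1 / t) = - YOh k t"
  by (simp add: YOh_def algebra_simps)

definition Y_poly :: "nat \<Rightarrow> nat \<Rightarrow> complex poly" where
  "Y_poly M k = smult ((-1) ^ k) ([:0, 1:] ^ k * [:1, 1:] ^ M) - [:0, 1:] ^ k * [:1, 1:] ^ (M - k)"

lemma poly_Y_poly:
  assumes "t \<noteq> 0" and "k \<le> M"
  shows "poly (Y_poly M k) (t - 1) / t ^ M = YOh k t"
proof -
  have tM: "t ^ M = t ^ (M - k) * t ^ k"
    using assms(2) by (metis le_add_diff_inverse2 power_add)
  have "(-1) * (1 / t - 1) = (t - 1) / t"
    using assms(1) by (simp add: field_simps)
  then have "(-1) ^ k * (1 / t - 1) ^ k = (t - 1) ^ k / t ^ k"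
    by (metis power_divide power_mult_distrib)
  moreover have "poly (Y_poly M k) (t - 1) / t ^ M = (-1) ^ k * (t - 1) ^ k - (t - 1) ^ k / t ^ k"
    using assms(1) by (simp add: Y_poly_def tM field_simps)
  ultimately show ?thesis
    by (simp add: YOh_def right_diff_distrib)
qed

lemma fps_of_poly_Y_poly:
  assumes "k \<le> M"
  shows "fps_of_poly (Y_poly M k) = (1 + fps_X) ^ M * Yh k"
proof -
  have "(1 + fps_X) ^ M * vfps ^ k = (1 + fps_X) ^ (M - k) * (vfps * (1 + fps_X)) ^ k"
    using assms by (simp add: power_mult_distrib mult_ac flip: power_add)
  then have v: "(1 + fps_X) ^ M * vfps ^ k = (1 + fps_X) ^ (M - k) * (- fps_X) ^ k"
    by (simp only: vfps_times_1_plus_X)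
  have "(1 + fps_X) ^ M * Yh k
      = (-1) ^ k * (fps_X ^ k * (1 + fps_X) ^ M) - (-1) ^ k * ((1 + fps_X) ^ M * vfps ^ k)"
    by (simp add: Yh_def algebra_simps)
  also have "\<dots> = (-1) ^ k * (fps_X ^ k * (1 + fps_X) ^ M) - fps_X ^ k * (1 + fps_X) ^ (M - k)"
    unfolding v power_minus[of "fps_X :: complex fps"]
    by (simp add: mult.assoc[symmetric] flip: power_mult_distrib)
  finally have "(1 + fps_X) ^ M * Yh k
      = (-1) ^ k * (fps_X ^ k * (1 + fps_X) ^ M) - fps_X ^ k * (1 + fps_X) ^ (M - k)" .
  moreover have "fps_const ((-1 :: complex) ^ k) = (-1) ^ k"
    by (simp flip: fps_const_power fps_const_neg)
  moreover have "fps_of_poly [:1, 1:] = (1 + fps_X :: complex fps)"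
    using fps_of_poly_linear'[of "1 :: complex"] by simp
  ultimately show ?thesis
    by (simp add: Y_poly_def fps_of_poly_diff fps_of_poly_smult fps_of_poly_mult fps_of_poly_power)
qed

lemma sum_smul_loop_YO:
  "(\<Sum>i\<in>A. smul_loop (c i) (YO (\<kappa> i))) = (0, 0, \<lambda>t. \<Sum>i\<in>A. c i * YOh (\<kappa> i) t)"
  by (induction A rule: infinite_finite_induct)
     (simp_all add: YO_eq smul_loop_def zero_prod_def zero_fun_def plus_fun_def)

lemma poly_Y_poly_combination:
  assumes "t \<noteq> 0" and "m \<le> M" and "\<forall>i\<in>A. \<kappa> i \<le> M"
  shows "poly (Y_poly M m - (\<Sum>i\<in>A. smult (c i) (Y_poly M (\<kappa> i)))) (t - 1) / t ^ M
    = YOh m t - (\<Sum>i\<in>A. c i * YOh (\<kappa> i) t)"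
proof -
  have "poly (Y_poly M m - (\<Sum>i\<in>A. smult (c i) (Y_poly M (\<kappa> i)))) (t - 1) / t ^ M
      = poly (Y_poly M m) (t - 1) / t ^ M
        - (\<Sum>i\<in>A. c i * (poly (Y_poly M (\<kappa> i)) (t - 1) / t ^ M))"
    by (simp add: poly_sum diff_divide_distrib sum_divide_distrib)
  also have "\<dots> = YOh m t - (\<Sum>i\<in>A. c i * YOh (\<kappa> i) t)"
    using assms by (simp add: poly_Y_poly cong: sum.cong)
  finally show ?thesis .
qed

lemma fps_of_poly_Y_poly_combination:
  assumes "m \<le> M" and "\<forall>i\<in>A. \<kappa> i \<le> M"
  shows "fps_of_poly (Y_poly M m - (\<Sum>i\<in>A. smult (c i) (Y_poly M (\<kappa> i))))
    = (1 + fps_X) ^ M * (Yh m - (\<Sum>i\<in>A. fps_const (c i) * Yh (\<kappa> i)))"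
  using assms
  by (simp add: fps_of_poly_diff fps_of_poly_sum fps_of_poly_smult fps_of_poly_Y_poly
      right_diff_distrib sum_distrib_left mult.left_commute cong: sum.cong)

lemma cong_mod_I_YO_if_Yh_cong:
  fixes c :: "'i \<Rightarrow> complex" and \<kappa> :: "'i \<Rightarrow> nat"
  assumes "finite A" and "\<forall>N<L. (Yh m - (\<Sum>i\<in>A. fps_const (c i) * Yh (\<kappa> i))) $ N = 0"
  shows "cong_mod_I L (YO m) (\<Sum>i\<in>A. smul_loop (c i) (YO (\<kappa> i)))"
proof -
  define M where "M = Max (insert m (\<kappa> ` A))"
  have M_ge: "m \<le> M" "\<forall>i\<in>A. \<kappa> i \<le> M"
    using assms(1) by (simp_all add: M_def)
  define P where "P = Y_poly M m - (\<Sum>i\<in>A. smult (c i) (Y_poly M (\<kappa> i)))"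
  define q where "q t = YOh m t - (\<Sum>i\<in>A. c i * YOh (\<kappa> i) t)" for t
  have "\<forall>t. t \<noteq> 0 \<longrightarrow> q t = poly P (t - 1) / t ^ M"
    unfolding P_def q_def by (intro allI impI) (erule poly_Y_poly_combination[OF _ M_ge, symmetric])
  moreover have "\<forall>N<L. coeff P N = 0"
  proof (intro allI impI)
    fix N
    assume "N < L"
    have "coeff P N = fps_of_poly P $ N"
      by simp
    also have "\<dots> = ((1 + fps_X) ^ M * (Yh m - (\<Sum>i\<in>A. fps_const (c i) * Yh (\<kappa> i)))) $ N"
      unfolding P_def fps_of_poly_Y_poly_combination[OF M_ge] ..
    also have "\<dots> = 0"
      unfolding fps_mult_nth using assms(2) \<open>N < L\<close> by (intro sum.neutral) auto
    finally show "coeff P N = 0" .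
  qed
  moreover have "\<forall>t. t \<noteq> 0 \<longrightarrow> q (1 / t) = - q t"
    by (simp add: q_def YOh_inverse sum_negf)
  ultimately have "(0, 0, q) \<in> ideal_I L"
    by (rule h_component_in_ideal_I)
  moreover have "YO m - (\<Sum>i\<in>A. smul_loop (c i) (YO (\<kappa> i))) = (0, 0, q)"
    by (simp only: sum_smul_loop_YO) (simp add: YO_eq q_def fun_eq_iff)
  ultimately show ?thesis
    by (simp add: cong_mod_I_def)
qed

theorem proposition3:
  shows "Yu 0 = 0 \<and>
    (\<forall>n\<ge>1. (\<lambda>j. smul_fps (coefY n (n + j)) (Yu (2 * (n + j) + 1))) sums Yu (2 * n)) \<and>
    (\<forall>L\<ge>1. (\<forall>k\<ge>L. cong_mod_I L (YO k) 0) \<and>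
       (\<forall>n\<ge>1. cong_mod_I L (YO (2 * n))
          (\<Sum>k\<in>{k. n \<le> k \<and> 2 * k + 1 < L}. smul_loop (coefY n k) (YO (2 * k + 1)))))"
proof (intro conjI allI impI)
  show "Yu 0 = 0"
    by (simp add: Yu_eq Yh_def zero_prod_def)
next
  fix n :: nat
  assume "n \<ge> 1"
  show "(\<lambda>j. smul_fps (coefY n (n + j)) (Yu (2 * (n + j) + 1))) sums Yu (2 * n)"
    using sums_third_component[OF Yh_even_sums[OF \<open>n \<ge> 1\<close>]] by (simp add: Yu_eq smul_fps_def)
next
  fix L k :: nat
  assume "L \<le> k"
  then show "cong_mod_I L (YO k) 0"
    using cong_mod_I_YO_if_Yh_cong[of "{}" L k] by (simp add: Yh_nth_eq_0)
next
  fix L n :: nat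
  assume "n \<ge> 1"
  let ?S = "{k. n \<le> k \<and> 2 * k + 1 < L}"
  have "finite ?S"
    by (rule finite_subset[of _ "{..<L}"]) auto
  moreover have "Yh (2 * n) $ N = (\<Sum>k\<in>?S. coefY n k * Yh (2 * k + 1) $ N)" if "N < L" for N
    using \<open>finite ?S\<close> that by (intro Yh_even_nth_expansion[OF \<open>n \<ge> 1\<close>]) auto
  ultimately show "cong_mod_I L (YO (2 * n)) (\<Sum>k\<in>?S. smul_loop (coefY n k) (YO (2 * k + 1)))"
    by (intro cong_mod_I_YO_if_Yh_cong) (simp_all add: fps_sum_nth)
qed

end
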